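(* Let $\alpha\in[0,1)$. The feedback capacity of the POST($\alpha$) channel equals the capacity of the memoryless $Z$ channel with parameter $\alpha$, namely $C_{fb}=-\log_2 c$, where $c=\left(1+\bar\alpha\,\alpha^{\alpha/\bar\alpha}\right)^{-1}$ and $\bar\alpha=1-\alpha$.
   Context: The POST($\alpha$) channel has binary inputs $X_i$ and binary outputs $Y_i$, with the previous output $Y_{i-1}$ serving as channel state (initial state $Y_0=s_0\in\{0,1\}$): if $X_i=Y_{i-1}$ then $Y_i=X_i$; otherwise $Y_i=X_i\oplus Z_i$, where $Z_i$ are i.i.d. Bernoulli($\alpha$) independent of everything else. Equivalently, when $y_{i-1}=0$ it acts as a $Z$ channel ($P(Y=0|X=0)=1$, $P(Y=0|X=1)=\alpha$) and when $y_{i-1}=1$ as the mirror-image $S$ channel ($P(Y=1|X=1)=1$, $P(Y=1|X=0)=\alpha$). Feedback capacity is the operational capacity when the encoder observes all past outputs; $0^0=1$. *)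

theory Defs
  imports Complex_Main
begin

text \<open>Real power with the convention 0^0 = 1 (Isabelle's powr has 0 powr 0 = 0).\<close>
definition pw :: "real \<Rightarrow> real \<Rightarrow> real" where
  "pw x y = (if x = 0 then (if y = 0 then 1 else 0) else x powr y)"

text \<open>POST(alpha) transition probability P(Y_i = y | X_i = x, Y_{i-1} = s).\<close>
definition post_W :: "real \<Rightarrow> bool \<Rightarrow> bool \<Rightarrow> bool \<Rightarrow> real" where
  "post_W \<alpha> s x y =
     (if x = s then (if y = x then 1 else 0)
      else (if y = x then 1 - \<alpha> else \<alpha>))"

fun post_out :: "real \<Rightarrow> bool \<Rightarrow> (bool list \<Rightarrow> bool) \<Rightarrow> bool list \<Rightarrow> bool list \<Rightarrow> real" where
  "post_out \<alpha> s e past [] = 1"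
| "post_out \<alpha> s e past (y # ys) = post_W \<alpha> s (e past) y * post_out \<alpha> y e (past @ [y]) ys"

definition fb_err :: "real \<Rightarrow> bool \<Rightarrow> nat \<Rightarrow> nat \<Rightarrow> (nat \<Rightarrow> bool list \<Rightarrow> bool)
                      \<Rightarrow> (bool list \<Rightarrow> nat) \<Rightarrow> real" where
  "fb_err \<alpha> s0 n M enc dec =
     (1 / real M) * (\<Sum>m<M. \<Sum>ys\<in>{ys :: bool list. length ys = n}.
        (if dec ys \<noteq> m then post_out \<alpha> s0 (enc m) [] ys else 0))"

definition fb_achievable :: "real \<Rightarrow> bool \<Rightarrow> real \<Rightarrow> bool" where
  "fb_achievable \<alpha> s0 R \<longleftrightarrow> R \<ge> 0 \<and>
     (\<forall>\<epsilon>>0. \<exists>N. \<forall>n\<ge>N. \<exists>M enc dec. real M \<ge> 2 powr (real n * R) \<and>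
        fb_err \<alpha> s0 n M enc dec \<le> \<epsilon>)"

definition fb_capacity :: "real \<Rightarrow> bool \<Rightarrow> real" where
  "fb_capacity \<alpha> s0 = Sup {R. fb_achievable \<alpha> s0 R}"

end

theory Submission
  imports Defs "HOL-Library.FuncSet"
begin

text \<open>Measured relative to its state (does the input, resp. the output, differ from the previous
  output?) the POST(\<open>\<alpha>\<close>) channel is the same Z channel in every state, so feedback can at
  best help to track the state, and the target is the Z-channel capacity \<open>log\<^sub>2 K\<close>,
  \<open>K = 1 + (1 - \<alpha>) \<alpha>\<^bsup>\<alpha>/(1-\<alpha>)\<^esup>\<close>.
  Both directions compare the law of the output block with the product \<open>Q\<close> of the
  capacity-achieving output law \<open>q\<close> of the Z channel. Since every input letter has divergence
  exactly \<open>ln K\<close> from \<open>q\<close>, the exponential moment \<open>\<Sum> P (P/Q)\<^sup>\<tau>\<close> of the information density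
  is at most \<open>exp (n (\<tau> ln K + O(\<tau>\<^sup>2)))\<close> for every feedback encoder.
  The converse combines this (\<open>\<tau> > 0\<close>) with the hypothesis-testing bound on the probability of
  correct decoding; achievability uses i.i.d. random codes in relative coordinates with a
  threshold decoder, bounded with \<open>\<tau> < 0\<close>.\<close>

section \<open>Tilted moments\<close>

lemma exp_le_quadratic:
  fixes x :: real
  assumes "\<bar>x\<bar> \<le> 1"
  shows "exp x \<le> 1 + x + x\<^sup>2"
proof (cases "0 \<le> x")
  case True
  then show ?thesis using assms exp_bound[of x] by simp
next
  case False
  define y where "y = -x"
  have y: "0 \<le> y" using False by (simp add: y_def)
  have "(1 + y/2)^2 \<le> exp (y/2) ^ 2" using y by (intro power_mono) (auto intro: exp_ge_add_one_self)
  also have "\<dots> = exp y" by (simp add: power2_eq_square exp_add[symmetric])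
  finally have lower: "1 + y + y^2/4 \<le> exp y" by (simp add: power2_eq_square algebra_simps)
  have pos: "0 < 1 + y + y^2/4" using y by (simp add: add_pos_nonneg)
  have "1 \<le> (1 - y + y^2) * (1 + y + y^2/4)"
  proof -
    have "(1 - y + y^2) * (1 + y + y^2/4) = 1 + y^2/4 + 3*y^3/4 + y^4/4"
      by (simp add: field_simps power2_eq_square power3_eq_cube power4_eq_xxxx)
    then show ?thesis using y by simp
  qed
  then have "1 / (1 + y + y^2/4) \<le> 1 - y + y^2" using pos by (simp add: divide_le_eq mult.commute)
  moreover have "exp x \<le> 1 / (1 + y + y^2/4)"
  proof -
    have "exp x = 1 / exp y" by (simp add: y_def exp_minus inverse_eq_divide)
    also have "\<dots> \<le> 1 / (1 + y + y^2/4)" using lower pos by (intro divide_left_mono) auto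
    finally show ?thesis .
  qed
  ultimately show ?thesis by (simp add: y_def)
qed

text \<open>The tilted weight \<open>p (p/q)^\<tau>\<close>; summed over an alphabet it is the exponential moment
  \<open>E\<^sub>p exp (\<tau> ln (p/q))\<close> of the information density. Since \<open>0 powr \<tau> = 0\<close>, it vanishes where \<open>p = 0\<close>.\<close>
definition tilt :: "real \<Rightarrow> real \<Rightarrow> real \<Rightarrow> real" where
  "tilt \<tau> q p = p * (p / q) powr \<tau>"

lemma tilt_nonneg: "0 \<le> p \<Longrightarrow> 0 \<le> tilt \<tau> q p"
  by (simp add: tilt_def)

lemma tilt_zero [simp]: "tilt \<tau> q 0 = 0"
  by (simp add: tilt_def)

lemma tilt_mult: "tilt \<tau> (q1 * q2) (p1 * p2) = tilt \<tau> q1 p1 * tilt \<tau> q2 p2"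
proof -
  have "p1 * p2 / (q1 * q2) = (p1 / q1) * (p2 / q2)" by simp
  then show ?thesis unfolding tilt_def by (simp only: powr_mult mult_ac)
qed

lemma le_tilt_above_threshold:
  assumes "0 \<le> s" "0 < \<gamma>" "0 < q" "\<gamma> * q < p"
  shows "p \<le> \<gamma> powr (- s) * tilt s q p"
proof -
  have "0 < p" using assms(2-4) mult_pos_pos[of \<gamma> q] by linarith
  have "\<gamma> < p / q" using assms by (simp add: field_simps)
  then have "\<gamma> powr s \<le> (p / q) powr s" using assms by (intro powr_mono2) auto
  then have "p * \<gamma> powr s \<le> p * (p / q) powr s"
    using \<open>0 < p\<close> by (intro mult_left_mono) auto
  then show ?thesis using assms by (simp add: tilt_def powr_minus field_simps)
qed

lemma le_tilt_below_threshold: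
  assumes "0 \<le> t" "0 < \<gamma>" "0 < q" "0 \<le> p" "p \<le> \<gamma> * q"
  shows "p \<le> \<gamma> powr t * tilt (- t) q p"
proof (cases "p = 0")
  case False
  then have "p / q \<le> \<gamma>" "0 < p / q" using assms by (auto simp: field_simps)
  then have "\<gamma> powr (- t) \<le> (p / q) powr (- t)" using assms by (intro powr_mono2') auto
  then have "p * \<gamma> powr (- t) \<le> p * (p / q) powr (- t)" using assms by (intro mult_left_mono) auto
  then show ?thesis using assms by (simp add: tilt_def powr_minus field_simps)
qed simp

lemma sum_tilt_le_exp:
  fixes p q :: "'a \<Rightarrow> real"
  assumes V: "finite V" and p: "\<And>v. v \<in> V \<Longrightarrow> 0 \<le> p v" "sum p V = 1"
    and q: "\<And>v. v \<in> V \<Longrightarrow> 0 < q v"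
    and small: "\<And>v. v \<in> V \<Longrightarrow> \<bar>\<tau> * ln (p v / q v)\<bar> \<le> 1"
  shows "(\<Sum>v\<in>V. tilt \<tau> (q v) (p v))
    \<le> exp (\<tau> * (\<Sum>v\<in>V. p v * ln (p v / q v)) + \<tau>\<^sup>2 * (\<Sum>v\<in>V. p v * (ln (p v / q v))\<^sup>2))"
proof -
  define L where "L v = ln (p v / q v)" for v
  have "tilt \<tau> (q v) (p v) \<le> p v + \<tau> * (p v * L v) + \<tau>\<^sup>2 * (p v * (L v)\<^sup>2)" if v: "v \<in> V" for v
  proof (cases "p v = 0")
    case False
    then have "0 < p v" "0 < p v / q v" using p q v by (auto simp: less_le)
    then have "tilt \<tau> (q v) (p v) = p v * exp (\<tau> * L v)" using q[OF v]
      by (simp add: tilt_def powr_def L_def mult.commute)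
    also have "\<dots> \<le> p v * (1 + \<tau> * L v + (\<tau> * L v)\<^sup>2)"
      using small[OF v] p(1)[OF v] by (intro mult_left_mono exp_le_quadratic) (auto simp: L_def)
    finally show ?thesis by (simp add: algebra_simps power_mult_distrib)
  qed simp
  then have "(\<Sum>v\<in>V. tilt \<tau> (q v) (p v))
      \<le> (\<Sum>v\<in>V. p v + \<tau> * (p v * L v) + \<tau>\<^sup>2 * (p v * (L v)\<^sup>2))"
    by (rule sum_mono)
  also have "\<dots> = 1 + (\<tau> * (\<Sum>v\<in>V. p v * L v) + \<tau>\<^sup>2 * (\<Sum>v\<in>V. p v * (L v)\<^sup>2))"
    using p(2) by (simp add: sum.distrib sum_distrib_left)
  also have "\<dots> \<le> exp (\<tau> * (\<Sum>v\<in>V. p v * L v) + \<tau>\<^sup>2 * (\<Sum>v\<in>V. p v * (L v)\<^sup>2))"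
    by (rule exp_ge_add_one_self)
  finally show ?thesis by (simp add: L_def)
qed

lemma eventually_exp_neg_less:
  fixes c e :: real
  assumes "0 < c" "0 < e"
  shows "eventually (\<lambda>n. exp (- (real n * c)) < e) sequentially"
proof -
  have "(\<lambda>n. exp (- c) ^ n) \<longlonglongrightarrow> 0" using assms by (intro LIMSEQ_power_zero) simp
  from order_tendstoD(2)[OF this assms(2)] have "eventually (\<lambda>n. exp (- c) ^ n < e) sequentially" .
  then show ?thesis by (simp add: exp_of_nat_mult[symmetric])
qed

lemma exists_small_tilt:
  fixes d B :: real
  assumes "0 < d" "0 < B"
  obtains s where "0 < s" "s \<le> 1 / B" "s\<^sup>2 * B \<le> s * d / 2"
proof
  define s where "s = min (1 / B) (d / (2 * B))"
  show "0 < s" "s \<le> 1 / B" using assms by (simp_all add: s_def)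
  have "s * B \<le> d / 2" using assms by (simp add: s_def min_def field_simps)
  then show "s\<^sup>2 * B \<le> s * d / 2"
    using \<open>0 < s\<close> mult_left_mono[of "s * B" "d / 2" s] by (simp add: power2_eq_square mult_ac)
qed

lemma tilt_exponent_eq:
  "exp (real n * (k + e)) powr (- \<tau>) * exp (\<tau> * k + \<tau>\<^sup>2 * B) ^ n
     = exp (- (real n * (\<tau> * e - \<tau>\<^sup>2 * B)))"
  by (simp add: powr_def exp_add[symmetric] flip: exp_of_nat_mult) (simp add: algebra_simps)

section \<open>Channels with output-dependent state\<close>

definition words :: "nat \<Rightarrow> 'a list set" where
  "words n = {xs. length xs = n}"

lemma finite_words [simp]: "finite (words n :: 'a::finite list set)"
  using finite_lists_length_eq[of "UNIV :: 'a set" n] by (simp add: words_def)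

lemma words_not_empty: "words n \<noteq> {}"
proof -
  have "replicate n undefined \<in> words n" by (simp add: words_def)
  then show ?thesis by blast
qed

lemma words_0 [simp]: "words 0 = {[]}"
  by (auto simp: words_def)

lemma sum_words_Suc:
  "(\<Sum>xs\<in>words (Suc n). g xs) = (\<Sum>x\<in>(UNIV :: 'a::finite set). \<Sum>xs\<in>words n. g (x # xs))"
proof -
  have image: "words (Suc n) = (\<lambda>(x, xs). x # xs) ` (UNIV \<times> words n)"
    by (auto simp: words_def length_Suc_conv image_iff)
  have inj: "inj_on (\<lambda>(x, xs). x # xs) (UNIV \<times> words n)" by (auto simp: inj_on_def)
  show ?thesis
    unfolding image sum.reindex[OF inj] sum.cartesian_product by (simp add: case_prod_unfold)
qed

text \<open>Kernels are written \<open>W state input output\<close>; the state is the previous output, and the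
  encoder \<open>e\<close> of \<open>fb_chain\<close> sees all past outputs.\<close>
fun fb_chain :: "('y \<Rightarrow> 'x \<Rightarrow> 'y \<Rightarrow> real) \<Rightarrow> 'y \<Rightarrow> ('y list \<Rightarrow> 'x) \<Rightarrow> 'y list \<Rightarrow> 'y list \<Rightarrow> real" where
  "fb_chain W s e past [] = 1"
| "fb_chain W s e past (y # ys) = W s (e past) y * fb_chain W y e (past @ [y]) ys"

fun out_chain :: "('y \<Rightarrow> 'y \<Rightarrow> real) \<Rightarrow> 'y \<Rightarrow> 'y list \<Rightarrow> real" where
  "out_chain q s [] = 1"
| "out_chain q s (y # ys) = q s y * out_chain q y ys"

fun ol_chain :: "('y \<Rightarrow> 'x \<Rightarrow> 'y \<Rightarrow> real) \<Rightarrow> 'y \<Rightarrow> 'x list \<Rightarrow> 'y list \<Rightarrow> real" where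
  "ol_chain W s (x # xs) (y # ys) = W s x y * ol_chain W y xs ys"
| "ol_chain W s _ _ = 1"

definition iid :: "('x \<Rightarrow> real) \<Rightarrow> 'x list \<Rightarrow> real" where
  "iid p xs = prod_list (map p xs)"

lemma fb_chain_nonneg: "(\<And>s x y. 0 \<le> W s x y) \<Longrightarrow> 0 \<le> fb_chain W s e past ys"
  by (induction ys arbitrary: s past) auto

lemma out_chain_pos: "(\<And>s y. 0 < q s y) \<Longrightarrow> 0 < out_chain q s ys"
  by (induction ys arbitrary: s) auto

lemma ol_chain_nonneg: "(\<And>s x y. 0 \<le> W s x y) \<Longrightarrow> 0 \<le> ol_chain W s xs ys"
  by (induction W s xs ys rule: ol_chain.induct) auto

lemma iid_simps [simp]: "iid p [] = 1" "iid p (x # xs) = p x * iid p xs"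
  by (simp_all add: iid_def)

lemma iid_nonneg: "(\<And>x. 0 \<le> p x) \<Longrightarrow> 0 \<le> iid p xs"
  by (induction xs) auto

lemma fb_chain_input_free: "fb_chain (\<lambda>s x. q s) s e past ys = out_chain q s ys"
  by (induction ys arbitrary: s past) auto

lemma fb_chain_tilt:
  "fb_chain (\<lambda>s x y. tilt \<tau> (q s y) (W s x y)) s e past ys = tilt \<tau> (out_chain q s ys) (fb_chain W s e past ys)"
  by (induction ys arbitrary: s past) (simp add: tilt_def, simp add: tilt_mult)

lemma fb_chain_open_loop:
  "length past + length ys = length xs \<Longrightarrow>
   fb_chain W s (\<lambda>p. xs ! length p) past ys = ol_chain W s (drop (length past) xs) ys"
proof (induction ys arbitrary: s past)
  case (Cons y ys)
  then have "drop (length past) xs = xs ! length past # drop (Suc (length past)) xs"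
    by (simp add: Cons_nth_drop_Suc)
  with Cons show ?case by simp
qed simp

lemma ol_chain_tilt:
  "length xs = length ys \<Longrightarrow>
   ol_chain (\<lambda>s x y. tilt \<tau> (q s y) (W s x y)) s xs ys = tilt \<tau> (out_chain q s ys) (ol_chain W s xs ys)"
proof (induction xs arbitrary: s ys)
  case (Cons x xs)
  then show ?case by (cases ys) (simp_all add: tilt_mult)
qed (simp add: tilt_def)

lemma sum_fb_chain_le:
  fixes W :: "'y::finite \<Rightarrow> 'x \<Rightarrow> 'y \<Rightarrow> real"
  assumes W: "\<And>s x y. 0 \<le> W s x y" and G: "\<And>s x. (\<Sum>y\<in>UNIV. W s x y) \<le> G"
  shows "(\<Sum>ys\<in>words n. fb_chain W s e past ys) \<le> G ^ n"
proof (induction n arbitrary: s past)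
  case (Suc n)
  have "0 \<le> G" using G[of s "e past"] sum_nonneg[of UNIV "W s (e past)"] W by (meson order.trans)
  have "(\<Sum>ys\<in>words (Suc n). fb_chain W s e past ys)
      = (\<Sum>y\<in>UNIV. W s (e past) y * (\<Sum>ys\<in>words n. fb_chain W y e (past @ [y]) ys))"
    by (simp add: sum_words_Suc sum_distrib_left)
  also have "\<dots> \<le> (\<Sum>y\<in>UNIV. W s (e past) y) * G ^ n"
    unfolding sum_distrib_right by (intro sum_mono mult_left_mono Suc W)
  also have "\<dots> \<le> G * G ^ n" using \<open>0 \<le> G\<close> by (intro mult_right_mono G) simp
  finally show ?case by simp
qed simp

lemma sum_fb_chain_eq_one:
  fixes W :: "'y::finite \<Rightarrow> 'x \<Rightarrow> 'y \<Rightarrow> real"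
  assumes "\<And>s x. (\<Sum>y\<in>UNIV. W s x y) = 1"
  shows "(\<Sum>ys\<in>words n. fb_chain W s e past ys) = 1"
proof (induction n arbitrary: s past)
  case (Suc n)
  then show ?case using assms by (simp add: sum_words_Suc flip: sum_distrib_left sum_distrib_right)
qed simp

lemma sum_out_chain_eq_one:
  fixes q :: "'y::finite \<Rightarrow> 'y \<Rightarrow> real"
  assumes "\<And>s. (\<Sum>y\<in>UNIV. q s y) = 1"
  shows "(\<Sum>ys\<in>words n. out_chain q s ys) = 1"
  using sum_fb_chain_eq_one[where W = "\<lambda>s x. q s" and e = "\<lambda>_. undefined" and past = "[]"] assms
  by (simp add: fb_chain_input_free)

lemma sum_ol_chain_eq_one:
  fixes W :: "'y::finite \<Rightarrow> 'x \<Rightarrow> 'y \<Rightarrow> real"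
  assumes "\<And>s x. (\<Sum>y\<in>UNIV. W s x y) = 1" and "length xs = n"
  shows "(\<Sum>ys\<in>words n. ol_chain W s xs ys) = 1"
proof -
  have "(\<Sum>ys\<in>words n. ol_chain W s xs ys) = (\<Sum>ys\<in>words n. fb_chain W s (\<lambda>p. xs ! length p) [] ys)"
    using assms(2) by (intro sum.cong refl) (simp add: words_def fb_chain_open_loop[where past = "[]", simplified])
  then show ?thesis using sum_fb_chain_eq_one[OF assms(1)] by simp
qed

lemma sum_iid:
  "(\<Sum>xs\<in>words n. iid p xs) = (\<Sum>x\<in>(UNIV :: 'x::finite set). p x) ^ n"
  by (induction n) (simp_all add: sum_words_Suc flip: sum_distrib_left sum_distrib_right)

lemma sum_iid_ol_chain:
  fixes p :: "'x::finite \<Rightarrow> real"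
  assumes "\<And>s y. (\<Sum>x\<in>UNIV. p x * W s x y) = q s y" and "length ys = n"
  shows "(\<Sum>xs\<in>words n. iid p xs * ol_chain W s xs ys) = out_chain q s ys"
  using assms(2)
proof (induction ys arbitrary: n s)
  case (Cons y ys)
  then obtain k where n: "n = Suc k" and k: "length ys = k" by auto
  have "(\<Sum>xs\<in>words n. iid p xs * ol_chain W s xs (y # ys))
      = (\<Sum>x\<in>UNIV. \<Sum>xs\<in>words k. p x * W s x y * (iid p xs * ol_chain W y xs ys))"
    by (simp add: n sum_words_Suc mult_ac)
  also have "\<dots> = (\<Sum>x\<in>UNIV. p x * W s x y) * (\<Sum>xs\<in>words k. iid p xs * ol_chain W y xs ys)"
    by (simp only: sum_product)
  finally show ?case using Cons.IH[OF k] assms(1) by simp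
qed simp

lemma sum_iid_ol_chain_le:
  fixes p :: "'x::finite \<Rightarrow> real" and W :: "'y::finite \<Rightarrow> 'x \<Rightarrow> 'y \<Rightarrow> real"
  assumes p: "\<And>x. 0 \<le> p x" and W: "\<And>s x y. 0 \<le> W s x y"
    and G: "\<And>s. (\<Sum>x\<in>UNIV. p x * (\<Sum>y\<in>UNIV. W s x y)) \<le> G"
  shows "(\<Sum>xs\<in>words n. \<Sum>ys\<in>words n. iid p xs * ol_chain W s xs ys) \<le> G ^ n"
proof (induction n arbitrary: s)
  case (Suc n)
  have "0 \<le> G"
    using G[of s] sum_nonneg[of UNIV "\<lambda>x. p x * (\<Sum>y\<in>UNIV. W s x y)"] p W
    by (meson mult_nonneg_nonneg sum_nonneg order.trans)
  have "(\<Sum>xs\<in>words (Suc n). \<Sum>ys\<in>words (Suc n). iid p xs * ol_chain W s xs ys)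
      = (\<Sum>x\<in>UNIV. p x * (\<Sum>y\<in>UNIV. W s x y *
           (\<Sum>xs\<in>words n. \<Sum>ys\<in>words n. iid p xs * ol_chain W y xs ys)))"
    by (simp add: sum_words_Suc sum_distrib_left mult_ac sum.swap[of _ UNIV "words n"])
  also have "\<dots> \<le> (\<Sum>x\<in>UNIV. p x * (\<Sum>y\<in>UNIV. W s x y)) * G ^ n"
    unfolding sum_distrib_right mult.assoc
    by (intro sum_mono mult_left_mono Suc p W)
  also have "\<dots> \<le> G * G ^ n" using \<open>0 \<le> G\<close> by (intro mult_right_mono G) simp
  finally show ?case by simp
qed simp

section \<open>Threshold tests and random coding\<close>

lemma correct_decoding_le_threshold:
  fixes P :: "nat \<Rightarrow> 'y \<Rightarrow> real" and Q :: "'y \<Rightarrow> real" and dec :: "'y \<Rightarrow> nat"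
  assumes "finite Y" and P: "\<And>m y. 0 \<le> P m y" and Q: "\<And>y. 0 \<le> Q y" "sum Q Y \<le> 1" and "0 \<le> \<gamma>"
  shows "(\<Sum>m<M. \<Sum>y\<in>Y. if dec y = m then P m y else 0)
    \<le> \<gamma> + (\<Sum>m<M. \<Sum>y\<in>Y. if \<gamma> * Q y < P m y then P m y else 0)"
proof -
  have "(\<Sum>m<M. \<Sum>y\<in>Y. if dec y = m then P m y else 0)
      \<le> (\<Sum>m<M. \<Sum>y\<in>Y. (if dec y = m then \<gamma> * Q y else 0) + (if \<gamma> * Q y < P m y then P m y else 0))"
    using P Q \<open>0 \<le> \<gamma>\<close> by (intro sum_mono) auto
  also have "\<dots> = (\<Sum>m<M. \<Sum>y\<in>Y. if dec y = m then \<gamma> * Q y else 0)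
      + (\<Sum>m<M. \<Sum>y\<in>Y. if \<gamma> * Q y < P m y then P m y else 0)"
    by (simp add: sum.distrib)
  also have "(\<Sum>m<M. \<Sum>y\<in>Y. if dec y = m then \<gamma> * Q y else 0) = (\<Sum>y\<in>Y. if dec y < M then \<gamma> * Q y else 0)"
    by (subst sum.swap) (simp add: sum.delta')
  also have "\<dots> \<le> \<gamma> * sum Q Y"
    unfolding sum_distrib_left using Q \<open>0 \<le> \<gamma>\<close> by (intro sum_mono) auto
  also have "\<dots> \<le> \<gamma>" using Q \<open>0 \<le> \<gamma>\<close> by (simp add: mult_left_le)
  finally show ?thesis by simp
qed

lemma sum_above_threshold_le_tilt:
  assumes "0 \<le> s" "0 < \<gamma>" "\<And>y. 0 < Q y" "\<And>y. 0 \<le> P y"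
  shows "(\<Sum>y\<in>Y. if \<gamma> * Q y < P y then P y else 0) \<le> \<gamma> powr (- s) * (\<Sum>y\<in>Y. tilt s (Q y) (P y))"
  unfolding sum_distrib_left
proof (intro sum_mono)
  fix y
  have "0 \<le> \<gamma> powr (- s) * tilt s (Q y) (P y)" using assms(4) by (simp add: tilt_nonneg)
  then show "(if \<gamma> * Q y < P y then P y else 0) \<le> \<gamma> powr (- s) * tilt s (Q y) (P y)"
    using le_tilt_above_threshold[of s \<gamma> "Q y" "P y"] assms by auto
qed

lemma sum_below_threshold_le_tilt:
  assumes "0 \<le> t" "0 < \<gamma>" "\<And>y. 0 < Q y" "\<And>y. 0 \<le> P y"
  shows "(\<Sum>y\<in>Y. if \<gamma> * Q y < P y then 0 else P y) \<le> \<gamma> powr t * (\<Sum>y\<in>Y. tilt (- t) (Q y) (P y))"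
  unfolding sum_distrib_left
proof (intro sum_mono)
  fix y
  have "0 \<le> \<gamma> powr t * tilt (- t) (Q y) (P y)" using assms(4) by (simp add: tilt_nonneg)
  then show "(if \<gamma> * Q y < P y then 0 else P y) \<le> \<gamma> powr t * tilt (- t) (Q y) (P y)"
    using le_tilt_below_threshold[of t \<gamma> "Q y" "P y"] assms by auto
qed

lemma sum_PiE_prod_component:
  fixes w f :: "'b \<Rightarrow> real"
  assumes "finite I" "finite S" "sum w S = 1" "j \<in> I"
  shows "(\<Sum>c\<in>PiE I (\<lambda>_. S). (\<Prod>i\<in>I. w (c i)) * f (c j)) = (\<Sum>u\<in>S. w u * f u)"
proof -
  have "(\<Sum>c\<in>PiE I (\<lambda>_. S). (\<Prod>i\<in>I. w (c i)) * f (c j))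
      = (\<Sum>c\<in>PiE I (\<lambda>_. S). \<Prod>i\<in>I. w (c i) * (if i = j then f (c i) else 1))"
    using assms by (simp add: prod.distrib prod.delta)
  also have "\<dots> = (\<Prod>i\<in>I. \<Sum>u\<in>S. w u * (if i = j then f u else 1))"
    using prod_sum_PiE[of I "\<lambda>_. S" "\<lambda>i u. w u * (if i = j then f u else 1)"] assms by simp
  also have "\<dots> = (\<Prod>i\<in>I. if i = j then \<Sum>u\<in>S. w u * f u else 1)"
    using assms by (intro prod.cong) auto
  finally show ?thesis using assms by (simp add: prod.delta)
qed

lemma sum_PiE_prod_two_components:
  fixes w f g :: "'b \<Rightarrow> real"
  assumes "finite I" "finite S" "sum w S = 1" "j \<in> I" "k \<in> I" "j \<noteq> k"
  shows "(\<Sum>c\<in>PiE I (\<lambda>_. S). (\<Prod>i\<in>I. w (c i)) * f (c j) * g (c k))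
    = (\<Sum>u\<in>S. w u * f u) * (\<Sum>u\<in>S. w u * g u)"
proof -
  define h where "h i u = (if i = j then f u else 1) * (if i = k then g u else 1)" for i u
  have "(\<Sum>c\<in>PiE I (\<lambda>_. S). (\<Prod>i\<in>I. w (c i)) * f (c j) * g (c k))
      = (\<Sum>c\<in>PiE I (\<lambda>_. S). \<Prod>i\<in>I. w (c i) * h i (c i))"
    using assms by (simp add: h_def prod.distrib prod.delta mult.assoc)
  also have "\<dots> = (\<Prod>i\<in>I. \<Sum>u\<in>S. w u * h i u)"
    using prod_sum_PiE[of I "\<lambda>_. S" "\<lambda>i u. w u * h i u"] assms by simp
  also have "\<dots> = (\<Prod>i\<in>I. (if i = j then \<Sum>u\<in>S. w u * f u else 1) * (if i = k then \<Sum>u\<in>S. w u * g u else 1))"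
    using assms by (intro prod.cong) (auto simp: h_def)
  finally show ?thesis using assms by (simp add: prod.distrib prod.delta)
qed

lemma exists_le_weighted_average:
  fixes f w :: "'c \<Rightarrow> real"
  assumes "finite C" "C \<noteq> {}" "\<And>c. c \<in> C \<Longrightarrow> 0 \<le> w c" "sum w C = 1" "(\<Sum>c\<in>C. w c * f c) \<le> X"
  shows "\<exists>c\<in>C. f c \<le> X"
proof -
  define m where "m = Min (f ` C)"
  have "m = (\<Sum>c\<in>C. w c * m)" using assms(4) by (simp flip: sum_distrib_right)
  also have "\<dots> \<le> (\<Sum>c\<in>C. w c * f c)" using assms(1,3) by (intro sum_mono mult_left_mono) (auto simp: m_def)
  moreover have "m \<in> f ` C" using assms(1,2) by (simp add: m_def)
  then obtain c where "c \<in> C" "f c = m" by blast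
  ultimately show ?thesis using assms(5) by force
qed

definition threshold_decoder :: "nat \<Rightarrow> ('u \<Rightarrow> 'y \<Rightarrow> bool) \<Rightarrow> (nat \<Rightarrow> 'u) \<Rightarrow> 'y \<Rightarrow> nat" where
  "threshold_decoder M test c y =
     (if \<exists>m<M. test (c m) y then LEAST m. m < M \<and> test (c m) y else 0)"

lemma threshold_decoder_error_le:
  fixes P :: real
  assumes "m < M" "0 \<le> P"
  shows "(if threshold_decoder M test c y \<noteq> m then P else 0)
    \<le> (if test (c m) y then 0 else P) + (\<Sum>m'\<in>{..<M} - {m}. if test (c m') y then P else 0)"
proof (cases "threshold_decoder M test c y \<noteq> m \<and> test (c m) y")
  case True
  then have ex: "\<exists>m<M. test (c m) y" using assms by blast
  define l where "l = (LEAST m. m < M \<and> test (c m) y)"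
  have l: "l < M" "test (c l) y" unfolding l_def using LeastI_ex[OF ex] by auto
  moreover have "l \<noteq> m" using True ex by (simp add: threshold_decoder_def l_def)
  ultimately have "(if test (c l) y then P else 0) \<le> (\<Sum>m'\<in>{..<M} - {m}. if test (c m') y then P else 0)"
    using assms by (intro member_le_sum[where f = "\<lambda>m'. if test (c m') y then P else 0"]) auto
  then have "P \<le> (\<Sum>m'\<in>{..<M} - {m}. if test (c m') y then P else 0)" using l by simp
  then show ?thesis using True by simp
next
  case False
  have "0 \<le> (\<Sum>m'\<in>{..<M} - {m}. if test (c m') y then P else 0)"
    using assms by (intro sum_nonneg) auto
  with False assms show ?thesis by auto
qed

lemma threshold_decoding_error_le:
  fixes P :: "'u \<Rightarrow> 'y \<Rightarrow> real"
  assumes "\<And>u y. 0 \<le> P u y"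
  shows "(\<Sum>m<M. \<Sum>y\<in>Y. if threshold_decoder M test c y \<noteq> m then P (c m) y else 0)
    \<le> (\<Sum>m<M. (\<Sum>y\<in>Y. if test (c m) y then 0 else P (c m) y)
          + (\<Sum>m'\<in>{..<M} - {m}. \<Sum>y\<in>Y. if test (c m') y then P (c m) y else 0))"
proof (rule sum_mono)
  fix m assume "m \<in> {..<M}"
  then have "(\<Sum>y\<in>Y. if threshold_decoder M test c y \<noteq> m then P (c m) y else 0)
      \<le> (\<Sum>y\<in>Y. (if test (c m) y then 0 else P (c m) y)
           + (\<Sum>m'\<in>{..<M} - {m}. if test (c m') y then P (c m) y else 0))"
    using assms by (intro sum_mono threshold_decoder_error_le) auto
  also have "\<dots> = (\<Sum>y\<in>Y. if test (c m) y then 0 else P (c m) y)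
      + (\<Sum>m'\<in>{..<M} - {m}. \<Sum>y\<in>Y. if test (c m') y then P (c m) y else 0)"
    by (simp add: sum.distrib sum.swap[of _ Y])
  finally show "(\<Sum>y\<in>Y. if threshold_decoder M test c y \<noteq> m then P (c m) y else 0) \<le> \<dots>" .
qed

text \<open>Two distinct codewords of a random code are independent, so the chance that the
  wrong one passes the threshold test is governed by the output law \<open>Q\<close>.\<close>
lemma random_code_confusion_le:
  fixes \<pi> :: "'u \<Rightarrow> real" and P :: "'u \<Rightarrow> 'y \<Rightarrow> real" and Q :: "'y \<Rightarrow> real" and M :: nat
  assumes U: "finite U" and \<pi>: "\<And>u. u \<in> U \<Longrightarrow> 0 \<le> \<pi> u" "sum \<pi> U = 1"
    and P: "\<And>u y. 0 \<le> P u y" "\<And>u. u \<in> U \<Longrightarrow> sum (P u) Y \<le> 1"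
    and Q: "\<And>y. y \<in> Y \<Longrightarrow> Q y = (\<Sum>u\<in>U. \<pi> u * P u y)"
    and \<gamma>: "0 < \<gamma>" and m: "m < M" "m' < M" "m \<noteq> m'"
  shows "(\<Sum>c\<in>PiE {..<M} (\<lambda>_. U). (\<Prod>i<M. \<pi> (c i)) *
      (\<Sum>y\<in>Y. if \<gamma> * Q y < P (c m') y then P (c m) y else 0)) \<le> 1 / \<gamma>"
proof -
  define ind where "ind u y = (if \<gamma> * Q y < P u y then 1 else 0 :: real)" for u y
  have "(\<Sum>c\<in>PiE {..<M} (\<lambda>_. U). (\<Prod>i<M. \<pi> (c i)) *
          (\<Sum>y\<in>Y. if \<gamma> * Q y < P (c m') y then P (c m) y else 0))
      = (\<Sum>y\<in>Y. \<Sum>c\<in>PiE {..<M} (\<lambda>_. U). (\<Prod>i<M. \<pi> (c i)) * P (c m) y * ind (c m') y)"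
    by (simp add: ind_def sum_distrib_left sum.swap[of _ "PiE {..<M} (\<lambda>_. U)"] if_distrib cong: if_cong)
  also have "\<dots> = (\<Sum>y\<in>Y. Q y * (\<Sum>u\<in>U. \<pi> u * ind u y))"
  proof (intro sum.cong refl)
    fix y assume "y \<in> Y"
    show "(\<Sum>c\<in>PiE {..<M} (\<lambda>_. U). (\<Prod>i<M. \<pi> (c i)) * P (c m) y * ind (c m') y)
        = Q y * (\<Sum>u\<in>U. \<pi> u * ind u y)"
      using sum_PiE_prod_two_components[where f = "\<lambda>u. P u y" and g = "\<lambda>u. ind u y", OF finite_lessThan U \<pi>(2)] m
      by (simp add: Q[OF \<open>y \<in> Y\<close>])
  qed
  also have "\<dots> = (\<Sum>u\<in>U. \<pi> u * (\<Sum>y\<in>Y. Q y * ind u y))"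
    by (simp add: sum_distrib_left sum.swap[of _ Y] mult_ac)
  also have "\<dots> \<le> (\<Sum>u\<in>U. \<pi> u * (1 / \<gamma>))"
  proof (intro sum_mono mult_left_mono)
    fix u assume u: "u \<in> U"
    have "(\<Sum>y\<in>Y. Q y * ind u y) \<le> (\<Sum>y\<in>Y. P u y / \<gamma>)"
      using \<gamma> P(1) by (intro sum_mono) (auto simp: ind_def field_simps)
    also have "\<dots> \<le> 1 / \<gamma>"
      using P(2)[OF u] \<gamma> by (simp add: divide_right_mono flip: sum_divide_distrib)
    finally show "(\<Sum>y\<in>Y. Q y * ind u y) \<le> 1 / \<gamma>" .
  qed (use \<pi>(1) in auto)
  also have "\<dots> = 1 / \<gamma>" using \<pi>(2) by (simp flip: sum_divide_distrib)
  finally show ?thesis .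
qed

lemma random_coding_threshold:
  fixes \<pi> :: "'u \<Rightarrow> real" and P :: "'u \<Rightarrow> 'y \<Rightarrow> real" and Q :: "'y \<Rightarrow> real"
    and M :: nat and \<gamma> :: real
  defines "test \<equiv> \<lambda>u y. \<gamma> * Q y < P u y"
  assumes U: "finite U" "U \<noteq> {}"
    and \<pi>: "\<And>u. u \<in> U \<Longrightarrow> 0 \<le> \<pi> u" "sum \<pi> U = 1"
    and P: "\<And>u y. 0 \<le> P u y" "\<And>u. u \<in> U \<Longrightarrow> sum (P u) Y \<le> 1"
    and Q: "\<And>y. y \<in> Y \<Longrightarrow> Q y = (\<Sum>u\<in>U. \<pi> u * P u y)"
    and M: "0 < M" and \<gamma>: "0 < \<gamma>"
  shows "\<exists>c\<in>PiE {..<M} (\<lambda>_. U).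
    (1 / M) * (\<Sum>m<M. \<Sum>y\<in>Y. if threshold_decoder M test c y \<noteq> m then P (c m) y else 0)
      \<le> (\<Sum>u\<in>U. \<pi> u * (\<Sum>y\<in>Y. if test u y then 0 else P u y)) + M / \<gamma>"
proof -
  define C where "C = PiE {..<M} (\<lambda>_. U)"
  define w where "w c = (\<Prod>i<M. \<pi> (c i))" for c
  define miss where "miss u = (\<Sum>y\<in>Y. if test u y then 0 else P u y)" for u
  define confuse where "confuse u u' = (\<Sum>y\<in>Y. if test u' y then P u y else 0)" for u u'
  define A where "A = (\<Sum>u\<in>U. \<pi> u * miss u)"
  have C: "finite C" "C \<noteq> {}" using U by (auto simp: C_def PiE_eq_empty_iff finite_PiE)
  have w_nonneg: "0 \<le> w c" if "c \<in> C" for c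
    using that \<pi>(1) by (auto simp: w_def C_def intro!: prod_nonneg)
  have sum_w: "sum w C = 1"
    using sum_PiE_prod_component[of "{..<M}" U \<pi> 0 "\<lambda>_. 1"] U \<pi>(2) M by (simp add: C_def w_def)
  have "(\<Sum>m<M. \<Sum>y\<in>Y. if threshold_decoder M test c y \<noteq> m then P (c m) y else 0)
      \<le> (\<Sum>m<M. miss (c m) + (\<Sum>m'\<in>{..<M} - {m}. confuse (c m) (c m')))" for c
    unfolding miss_def confuse_def by (rule threshold_decoding_error_le[OF P(1)])
  then have "(\<Sum>c\<in>C. w c * ((1 / M) * (\<Sum>m<M. \<Sum>y\<in>Y. if threshold_decoder M test c y \<noteq> m then P (c m) y else 0)))
      \<le> (\<Sum>c\<in>C. w c * ((1 / M) * (\<Sum>m<M. miss (c m) + (\<Sum>m'\<in>{..<M} - {m}. confuse (c m) (c m')))))"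
    using w_nonneg by (intro sum_mono, intro mult_left_mono) auto
  also have "\<dots> = (1 / M) * (\<Sum>m<M. (\<Sum>c\<in>C. w c * miss (c m))
      + (\<Sum>m'\<in>{..<M} - {m}. \<Sum>c\<in>C. w c * confuse (c m) (c m')))"
    by (simp add: sum_distrib_left distrib_left sum.distrib sum.swap[of _ C] mult_ac)
  also have "\<dots> \<le> (1 / M) * (\<Sum>m<M. A + M / \<gamma>)"
  proof (intro mult_left_mono sum_mono)
    fix m assume m: "m \<in> {..<M}"
    have "(\<Sum>c\<in>C. w c * miss (c m)) = A"
      using sum_PiE_prod_component[of "{..<M}" U \<pi> m miss] U \<pi>(2) m by (simp add: C_def w_def A_def)
    moreover have "(\<Sum>m'\<in>{..<M} - {m}. \<Sum>c\<in>C. w c * confuse (c m) (c m')) \<le> (\<Sum>m'\<in>{..<M} - {m}. 1 / \<gamma>)"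
      using m U(1) \<pi> P Q \<gamma> unfolding C_def w_def confuse_def test_def
      by (intro sum_mono random_code_confusion_le) auto
    moreover have "(\<Sum>m'\<in>{..<M} - {m}. 1 / \<gamma>) \<le> M / \<gamma>"
      using \<gamma> by (simp add: card_Diff_singleton_if divide_right_mono)
    ultimately show "(\<Sum>c\<in>C. w c * miss (c m)) + (\<Sum>m'\<in>{..<M} - {m}. \<Sum>c\<in>C. w c * confuse (c m) (c m'))
        \<le> A + M / \<gamma>"
      by simp
  qed simp
  also have "\<dots> = A + M / \<gamma>" using M by simp
  finally show ?thesis
    using exists_le_weighted_average[OF C _ sum_w] w_nonneg by (simp add: C_def A_def miss_def)
qed

section \<open>The Z channel\<close>

text \<open>\<open>b\<close>: the input differs from the previous output; \<open>v\<close>: the new output does.\<close>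
definition zchan :: "real \<Rightarrow> bool \<Rightarrow> bool \<Rightarrow> real" where
  "zchan \<alpha> b v = (if b then (if v then 1 - \<alpha> else \<alpha>) else (if v then 0 else 1))"

definition z_weight :: "real \<Rightarrow> real" where
  "z_weight \<alpha> = pw \<alpha> (\<alpha> / (1 - \<alpha>))"

definition z_norm :: "real \<Rightarrow> real" where
  "z_norm \<alpha> = 1 + (1 - \<alpha>) * z_weight \<alpha>"

definition z_opt_input :: "real \<Rightarrow> bool \<Rightarrow> real" where
  "z_opt_input \<alpha> b = (if b then z_weight \<alpha> / z_norm \<alpha> else 1 - z_weight \<alpha> / z_norm \<alpha>)"

definition z_opt_output :: "real \<Rightarrow> bool \<Rightarrow> real" where
  "z_opt_output \<alpha> v = (if v then (1 - \<alpha>) * z_weight \<alpha> / z_norm \<alpha> else 1 / z_norm \<alpha>)"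

locale z_channel =
  fixes \<alpha> :: real
  assumes nonneg: "0 \<le> \<alpha>" and less_one: "\<alpha> < 1"
begin

lemma z_weight_pos: "0 < z_weight \<alpha>" and z_weight_le_one: "z_weight \<alpha> \<le> 1"
  using nonneg less_one by (auto simp: z_weight_def pw_def powr_le1)

lemma z_norm_gt_one: "1 < z_norm \<alpha>"
  using z_weight_pos less_one by (simp add: z_norm_def)

lemma zchan_nonneg: "0 \<le> zchan \<alpha> b v"
  using nonneg less_one by (simp add: zchan_def)

lemma sum_zchan: "(\<Sum>v\<in>UNIV. zchan \<alpha> b v) = 1"
  by (simp add: zchan_def UNIV_bool)

lemma z_opt_output_pos: "0 < z_opt_output \<alpha> v"
  using z_weight_pos less_one z_norm_gt_one by (simp add: z_opt_output_def)

lemma sum_z_opt_output: "(\<Sum>v\<in>UNIV. z_opt_output \<alpha> v) = 1"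
  using z_norm_gt_one by (simp add: z_opt_output_def UNIV_bool z_norm_def field_simps)

lemma z_opt_input_nonneg: "0 \<le> z_opt_input \<alpha> b"
  using z_weight_pos z_weight_le_one z_norm_gt_one by (simp add: z_opt_input_def)

lemma sum_z_opt_input: "(\<Sum>b\<in>UNIV. z_opt_input \<alpha> b) = 1"
  by (simp add: z_opt_input_def UNIV_bool)

lemma z_opt_input_output: "(\<Sum>b\<in>UNIV. z_opt_input \<alpha> b * zchan \<alpha> b v) = z_opt_output \<alpha> v"
  using z_norm_gt_one
  by (cases v) (simp_all add: z_opt_input_def zchan_def z_opt_output_def UNIV_bool z_norm_def field_simps)

text \<open>Every input has the same divergence from the optimal output law (the equidistance
  property of capacity-achieving distributions). For \<open>b\<close> this rests on
  \<open>(1 - \<alpha>) ln (z_weight \<alpha>) = \<alpha> ln \<alpha>\<close>, which also holds at \<open>\<alpha> = 0\<close> thanks to \<open>0\<^sup>0 = 1\<close>.\<close>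
lemma z_divergence_eq:
  "(\<Sum>v\<in>UNIV. zchan \<alpha> b v * ln (zchan \<alpha> b v / z_opt_output \<alpha> v)) = ln (z_norm \<alpha>)"
proof -
  have K: "0 < z_norm \<alpha>" and a: "0 < z_weight \<alpha>" using z_norm_gt_one z_weight_pos by auto
  have weight: "(1 - \<alpha>) * ln (z_weight \<alpha>) = \<alpha> * ln \<alpha>"
    using nonneg less_one by (cases "\<alpha> = 0") (simp_all add: z_weight_def pw_def ln_powr)
  show ?thesis
  proof (cases b)
    case True
    have first: "ln ((1 - \<alpha>) / ((1 - \<alpha>) * z_weight \<alpha> / z_norm \<alpha>)) = ln (z_norm \<alpha>) - ln (z_weight \<alpha>)"
      using less_one K a by (simp add: ln_div)
    have second: "\<alpha> * ln (\<alpha> / (1 / z_norm \<alpha>)) = \<alpha> * ln \<alpha> + \<alpha> * ln (z_norm \<alpha>)"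
      using nonneg K by (cases "\<alpha> = 0") (simp_all add: ln_mult distrib_left)
    have "(\<Sum>v\<in>UNIV. zchan \<alpha> b v * ln (zchan \<alpha> b v / z_opt_output \<alpha> v))
        = (1 - \<alpha>) * ln ((1 - \<alpha>) / ((1 - \<alpha>) * z_weight \<alpha> / z_norm \<alpha>)) + \<alpha> * ln (\<alpha> / (1 / z_norm \<alpha>))"
      using True by (simp add: zchan_def z_opt_output_def UNIV_bool)
    also have "\<dots> = ln (z_norm \<alpha>) - (1 - \<alpha>) * ln (z_weight \<alpha>) + \<alpha> * ln \<alpha>"
      unfolding first second by (simp add: algebra_simps)
    finally show ?thesis using weight by simp
  qed (simp add: zchan_def z_opt_output_def UNIV_bool)
qed

lemma z_tilt_moment_bound:
  obtains B where "0 < B"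
    "\<And>\<tau> b. \<bar>\<tau>\<bar> \<le> 1 / B \<Longrightarrow>
       (\<Sum>v\<in>UNIV. tilt \<tau> (z_opt_output \<alpha> v) (zchan \<alpha> b v)) \<le> exp (\<tau> * ln (z_norm \<alpha>) + \<tau>\<^sup>2 * B)"
proof
  define L where "L b v = ln (zchan \<alpha> b v / z_opt_output \<alpha> v)" for b v
  define B where "B = 1 + (\<Sum>b\<in>UNIV. \<Sum>v\<in>UNIV. (L b v)\<^sup>2)"
  have sq_le: "(\<Sum>v\<in>UNIV. (L b v)\<^sup>2) \<le> B - 1" for b
    unfolding B_def by simp (rule member_le_sum[where f = "\<lambda>b. \<Sum>v\<in>UNIV. (L b v)\<^sup>2"], auto intro: sum_nonneg)
  show "0 < B" by (simp add: B_def add_pos_nonneg sum_nonneg)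
  have abs_le: "\<bar>L b v\<bar> \<le> B" for b v
  proof -
    have "\<bar>L b v\<bar> \<le> 1 + (L b v)\<^sup>2"
      using zero_le_power2[of "\<bar>L b v\<bar> - 1"] by (simp add: power2_eq_square algebra_simps)
    also have "(L b v)\<^sup>2 \<le> (\<Sum>v\<in>UNIV. (L b v)\<^sup>2)" by (rule member_le_sum) auto
    finally show ?thesis using sq_le[of b] by simp
  qed
  fix \<tau> b assume \<tau>: "\<bar>\<tau>\<bar> \<le> 1 / B"
  have "\<bar>\<tau> * L b v\<bar> \<le> 1" for v
  proof -
    have "\<bar>\<tau> * L b v\<bar> \<le> 1 / B * B" unfolding abs_mult using \<tau> abs_le[of b v] by (intro mult_mono) auto
    then show ?thesis using \<open>0 < B\<close> by simp
  qed
  then have "(\<Sum>v\<in>UNIV. tilt \<tau> (z_opt_output \<alpha> v) (zchan \<alpha> b v))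
      \<le> exp (\<tau> * ln (z_norm \<alpha>) + \<tau>\<^sup>2 * (\<Sum>v\<in>UNIV. zchan \<alpha> b v * (L b v)\<^sup>2))"
    using z_divergence_eq[of b]
    by (intro order.trans[OF sum_tilt_le_exp]) (auto simp: L_def zchan_nonneg sum_zchan z_opt_output_pos)
  also have "(\<Sum>v\<in>UNIV. zchan \<alpha> b v * (L b v)\<^sup>2) \<le> (\<Sum>v\<in>UNIV. (L b v)\<^sup>2)"
    using zchan_nonneg nonneg less_one by (intro sum_mono mult_left_le_one_le) (auto simp: zchan_def)
  also have "\<dots> \<le> B" using sq_le[of b] by simp
  finally show "(\<Sum>v\<in>UNIV. tilt \<tau> (z_opt_output \<alpha> v) (zchan \<alpha> b v)) \<le> exp (\<tau> * ln (z_norm \<alpha>) + \<tau>\<^sup>2 * B)"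
    by (simp add: mult_left_mono)
qed

end

section \<open>The POST channel\<close>

definition post_rel :: "real \<Rightarrow> bool \<Rightarrow> bool \<Rightarrow> bool \<Rightarrow> real" where
  "post_rel \<alpha> s b y = zchan \<alpha> b (y \<noteq> s)"

definition z_ref :: "real \<Rightarrow> bool \<Rightarrow> bool \<Rightarrow> real" where
  "z_ref \<alpha> s y = z_opt_output \<alpha> (y \<noteq> s)"

text \<open>Sends the \<open>i\<close>-th letter of \<open>u\<close> in relative coordinates: the input flips the current
  state exactly when \<open>u ! i\<close> holds. Thus feedback is used only to track the state.\<close>
definition flip_encoder :: "bool \<Rightarrow> bool list \<Rightarrow> bool list \<Rightarrow> bool" where
  "flip_encoder s0 u past = (u ! length past \<noteq> last (s0 # past))"

lemma sum_bool_neq: "(\<Sum>y\<in>UNIV. h (y \<noteq> (s::bool))) = (\<Sum>v\<in>UNIV. h v)"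
  by (cases s) (simp_all add: UNIV_bool add.commute)

lemma post_W_eq_zchan: "post_W \<alpha> s x y = zchan \<alpha> (x \<noteq> s) (y \<noteq> s)"
  by (cases s; cases x; cases y) (auto simp: post_W_def zchan_def)

lemma post_out_eq_fb_chain: "post_out \<alpha> s e past ys = fb_chain (post_W \<alpha>) s e past ys"
  by (induction ys arbitrary: s past) auto

lemma post_out_flip_encoder:
  "post_out \<alpha> (last (s0 # past)) (flip_encoder s0 u) past ys
     = fb_chain (post_rel \<alpha>) (last (s0 # past)) (\<lambda>p. u ! length p) past ys"
proof (induction ys arbitrary: past)
  case (Cons y ys)
  have "post_W \<alpha> (last (s0 # past)) (flip_encoder s0 u past) y = post_rel \<alpha> (last (s0 # past)) (u ! length past) y"
    by (cases "last (s0 # past)"; cases "u ! length past") (simp_all add: flip_encoder_def post_W_eq_zchan post_rel_def)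
  with Cons.IH[of "past @ [y]"] show ?case by simp
qed simp

lemma post_out_flip_encoder_eq_ol_chain:
  "length ys = length u \<Longrightarrow> post_out \<alpha> s0 (flip_encoder s0 u) [] ys = ol_chain (post_rel \<alpha>) s0 u ys"
  using post_out_flip_encoder[where past = "[]"] fb_chain_open_loop[where past = "[]"] by simp

lemma fb_err_eq:
  "fb_err \<alpha> s0 n M enc dec
     = (1 / M) * (\<Sum>m<M. \<Sum>ys\<in>words n. if dec ys \<noteq> m then post_out \<alpha> s0 (enc m) [] ys else 0)"
  by (simp add: fb_err_def words_def)

context z_channel
begin

lemma post_rel_nonneg: "0 \<le> post_rel \<alpha> s b y"
  by (simp add: post_rel_def zchan_nonneg)

lemma sum_post_rel: "(\<Sum>y\<in>UNIV. post_rel \<alpha> s b y) = 1"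
  using sum_bool_neq[of "zchan \<alpha> b" s] by (simp add: post_rel_def sum_zchan)

lemma sum_post_W: "(\<Sum>y\<in>UNIV. post_W \<alpha> s x y) = 1"
  using sum_bool_neq[of "zchan \<alpha> (x \<noteq> s)" s] by (simp add: post_W_eq_zchan sum_zchan)

lemma z_ref_pos: "0 < z_ref \<alpha> s y"
  by (simp add: z_ref_def z_opt_output_pos)

lemma sum_z_ref: "(\<Sum>y\<in>UNIV. z_ref \<alpha> s y) = 1"
  using sum_bool_neq[of "z_opt_output \<alpha>" s] by (simp add: z_ref_def sum_z_opt_output)

lemma one_minus_fb_err:
  assumes "0 < M"
  shows "1 - fb_err \<alpha> s0 n M enc dec
    = (1 / M) * (\<Sum>m<M. \<Sum>ys\<in>words n. if dec ys = m then post_out \<alpha> s0 (enc m) [] ys else 0)"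
proof -
  have "(\<Sum>ys\<in>words n. post_out \<alpha> s0 (enc m) [] ys) = 1" for m
    unfolding post_out_eq_fb_chain by (rule sum_fb_chain_eq_one[OF sum_post_W])
  moreover have "(\<Sum>ys\<in>words n. if dec ys \<noteq> m then post_out \<alpha> s0 (enc m) [] ys else 0)
      = (\<Sum>ys\<in>words n. post_out \<alpha> s0 (enc m) [] ys - (if dec ys = m then post_out \<alpha> s0 (enc m) [] ys else 0))" for m
    by (intro sum.cong) auto
  ultimately have split: "(\<Sum>ys\<in>words n. if dec ys \<noteq> m then post_out \<alpha> s0 (enc m) [] ys else 0)
      = 1 - (\<Sum>ys\<in>words n. if dec ys = m then post_out \<alpha> s0 (enc m) [] ys else 0)" for m
    by (simp add: sum_subtractf)
  show ?thesis unfolding fb_err_eq split using assms by (simp add: sum_subtractf field_simps)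
qed

lemma post_converse_bound:
  assumes M: "0 < M" and \<gamma>: "0 < \<gamma>" and s: "0 \<le> s"
    and G: "\<And>b. (\<Sum>v\<in>UNIV. tilt s (z_opt_output \<alpha> v) (zchan \<alpha> b v)) \<le> G"
  shows "1 - fb_err \<alpha> s0 n M enc dec \<le> \<gamma> / M + \<gamma> powr (- s) * G ^ n"
proof -
  define P where "P m ys = post_out \<alpha> s0 (enc m) [] ys" for m ys
  define Q where "Q ys = out_chain (z_ref \<alpha>) s0 ys" for ys
  have P_nonneg: "0 \<le> P m ys" for m ys
    unfolding P_def post_out_eq_fb_chain by (rule fb_chain_nonneg) (simp add: post_W_eq_zchan zchan_nonneg)
  have Q_pos: "0 < Q ys" for ys
    unfolding Q_def by (rule out_chain_pos) (rule z_ref_pos)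
  have sum_Q: "sum Q (words n) = 1"
    unfolding Q_def by (rule sum_out_chain_eq_one) (rule sum_z_ref)
  have tilted: "(\<Sum>ys\<in>words n. tilt s (Q ys) (P m ys)) \<le> G ^ n" for m
  proof -
    have "(\<Sum>ys\<in>words n. tilt s (Q ys) (P m ys))
        = (\<Sum>ys\<in>words n. fb_chain (\<lambda>st x y. tilt s (z_ref \<alpha> st y) (post_W \<alpha> st x y)) s0 (enc m) [] ys)"
      by (simp add: P_def Q_def post_out_eq_fb_chain fb_chain_tilt)
    also have "\<dots> \<le> G ^ n"
    proof (rule sum_fb_chain_le)
      show "0 \<le> tilt s (z_ref \<alpha> st y) (post_W \<alpha> st x y)" for st x y
        by (simp add: tilt_nonneg post_W_eq_zchan zchan_nonneg)
      show "(\<Sum>y\<in>UNIV. tilt s (z_ref \<alpha> st y) (post_W \<alpha> st x y)) \<le> G" for st x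
        using sum_bool_neq[of "\<lambda>v. tilt s (z_opt_output \<alpha> v) (zchan \<alpha> (x \<noteq> st) v)" st] G[of "x \<noteq> st"]
        by (simp add: z_ref_def post_W_eq_zchan)
    qed
    finally show ?thesis .
  qed
  have "1 - fb_err \<alpha> s0 n M enc dec = (1 / M) * (\<Sum>m<M. \<Sum>ys\<in>words n. if dec ys = m then P m ys else 0)"
    unfolding P_def using M by (rule one_minus_fb_err)
  also have "\<dots> \<le> (1 / M) * (\<gamma> + (\<Sum>m<M. \<Sum>ys\<in>words n. if \<gamma> * Q ys < P m ys then P m ys else 0))"
    using P_nonneg Q_pos sum_Q \<gamma>
    by (intro mult_left_mono correct_decoding_le_threshold) (auto intro: less_imp_le)
  also have "\<dots> \<le> (1 / M) * (\<gamma> + (\<Sum>m<M. \<gamma> powr (- s) * G ^ n))"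
  proof (intro mult_left_mono add_left_mono sum_mono)
    fix m
    have "(\<Sum>ys\<in>words n. if \<gamma> * Q ys < P m ys then P m ys else 0)
        \<le> \<gamma> powr (- s) * (\<Sum>ys\<in>words n. tilt s (Q ys) (P m ys))"
      using s \<gamma> Q_pos P_nonneg by (rule sum_above_threshold_le_tilt)
    also have "\<dots> \<le> \<gamma> powr (- s) * G ^ n" using tilted by (intro mult_left_mono) auto
    finally show "(\<Sum>ys\<in>words n. if \<gamma> * Q ys < P m ys then P m ys else 0) \<le> \<gamma> powr (- s) * G ^ n" .
  qed simp
  also have "\<dots> = \<gamma> / M + \<gamma> powr (- s) * G ^ n" using M by (simp add: field_simps)
  finally show ?thesis .
qed

lemma z_opt_input_post_rel: "(\<Sum>b\<in>UNIV. z_opt_input \<alpha> b * post_rel \<alpha> s b y) = z_ref \<alpha> s y"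
  by (simp add: post_rel_def z_ref_def z_opt_input_output)

lemma post_random_code_miss_le:
  assumes \<gamma>: "0 < \<gamma>" and t: "0 \<le> t"
    and G: "\<And>b. (\<Sum>v\<in>UNIV. tilt (- t) (z_opt_output \<alpha> v) (zchan \<alpha> b v)) \<le> G"
  shows "(\<Sum>u\<in>words n. iid (z_opt_input \<alpha>) u * (\<Sum>y\<in>words n.
      if \<gamma> * out_chain (z_ref \<alpha>) s0 y < ol_chain (post_rel \<alpha>) s0 u y then 0 else ol_chain (post_rel \<alpha>) s0 u y))
    \<le> \<gamma> powr t * G ^ n"
proof -
  define \<pi> where "\<pi> = iid (z_opt_input \<alpha>)"
  define P where "P u ys = ol_chain (post_rel \<alpha>) s0 u ys" for u ys
  define Q where "Q ys = out_chain (z_ref \<alpha>) s0 ys" for ys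
  have "(\<Sum>u\<in>words n. \<pi> u * (\<Sum>y\<in>words n. if \<gamma> * Q y < P u y then 0 else P u y))
      \<le> (\<Sum>u\<in>words n. \<pi> u * (\<gamma> powr t * (\<Sum>y\<in>words n. tilt (- t) (Q y) (P u y))))"
    using t \<gamma> unfolding P_def Q_def
    by (intro sum_mono mult_left_mono sum_below_threshold_le_tilt)
      (auto simp: \<pi>_def iid_nonneg z_opt_input_nonneg out_chain_pos z_ref_pos ol_chain_nonneg post_rel_nonneg)
  also have "\<dots> = \<gamma> powr t * (\<Sum>u\<in>words n. \<Sum>y\<in>words n. \<pi> u *
        ol_chain (\<lambda>st b y. tilt (- t) (z_ref \<alpha> st y) (post_rel \<alpha> st b y)) s0 u y)"
    by (simp add: sum_distrib_left P_def Q_def ol_chain_tilt words_def mult_ac)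
  also have "\<dots> \<le> \<gamma> powr t * G ^ n"
  proof (intro mult_left_mono)
    show "(\<Sum>u\<in>words n. \<Sum>y\<in>words n. \<pi> u *
        ol_chain (\<lambda>st b y. tilt (- t) (z_ref \<alpha> st y) (post_rel \<alpha> st b y)) s0 u y) \<le> G ^ n"
      unfolding \<pi>_def
    proof (rule sum_iid_ol_chain_le)
      fix st
      have "(\<Sum>b\<in>UNIV. z_opt_input \<alpha> b * (\<Sum>y\<in>UNIV. tilt (- t) (z_ref \<alpha> st y) (post_rel \<alpha> st b y)))
          \<le> (\<Sum>b\<in>UNIV. z_opt_input \<alpha> b * G)"
        using G sum_bool_neq[of "\<lambda>v. tilt (- t) (z_opt_output \<alpha> v) (zchan \<alpha> _ v)" st]
        by (intro sum_mono mult_left_mono) (auto simp: z_ref_def post_rel_def z_opt_input_nonneg)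
      then show "(\<Sum>b\<in>UNIV. z_opt_input \<alpha> b * (\<Sum>y\<in>UNIV. tilt (- t) (z_ref \<alpha> st y) (post_rel \<alpha> st b y))) \<le> G"
        by (simp add: sum_z_opt_input flip: sum_distrib_right)
    qed (auto simp: z_opt_input_nonneg tilt_nonneg post_rel_nonneg)
  qed simp
  finally show ?thesis unfolding \<pi>_def P_def Q_def .
qed

lemma post_achievability_bound:
  assumes M: "0 < M" and \<gamma>: "0 < \<gamma>" and t: "0 \<le> t"
    and G: "\<And>b. (\<Sum>v\<in>UNIV. tilt (- t) (z_opt_output \<alpha> v) (zchan \<alpha> b v)) \<le> G"
  shows "\<exists>enc dec. fb_err \<alpha> s0 n M enc dec \<le> \<gamma> powr t * G ^ n + M / \<gamma>"
proof -
  define \<pi> where "\<pi> = iid (z_opt_input \<alpha>)"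
  define P where "P u ys = ol_chain (post_rel \<alpha>) s0 u ys" for u ys
  define Q where "Q ys = out_chain (z_ref \<alpha>) s0 ys" for ys
  have \<pi>_nonneg: "0 \<le> \<pi> u" for u
    unfolding \<pi>_def by (rule iid_nonneg) (rule z_opt_input_nonneg)
  have sum_\<pi>: "sum \<pi> (words n) = 1"
    by (simp add: \<pi>_def sum_iid sum_z_opt_input)
  have P_nonneg: "0 \<le> P u ys" for u ys
    unfolding P_def by (rule ol_chain_nonneg) (rule post_rel_nonneg)
  have sum_P: "sum (P u) (words n) \<le> 1" if "u \<in> words n" for u
    using that sum_ol_chain_eq_one[where W = "post_rel \<alpha>", OF sum_post_rel] by (simp add: P_def words_def)
  have Q_mix: "Q y = (\<Sum>u\<in>words n. \<pi> u * P u y)" if "y \<in> words n" for y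
    using that sum_iid_ol_chain[where W = "post_rel \<alpha>", OF z_opt_input_post_rel]
    by (simp add: P_def Q_def \<pi>_def words_def)
  obtain c where c: "c \<in> PiE {..<M} (\<lambda>_. words n)"
    and err: "(1 / M) * (\<Sum>m<M. \<Sum>y\<in>words n.
               if threshold_decoder M (\<lambda>u y. \<gamma> * Q y < P u y) c y \<noteq> m then P (c m) y else 0)
             \<le> (\<Sum>u\<in>words n. \<pi> u * (\<Sum>y\<in>words n. if \<gamma> * Q y < P u y then 0 else P u y)) + M / \<gamma>"
    using random_coding_threshold[where U = "words n" and Y = "words n" and \<pi> = \<pi> and P = P and Q = Q,
        OF finite_words words_not_empty \<pi>_nonneg sum_\<pi> P_nonneg sum_P Q_mix M \<gamma>]
    by blast
  have "post_out \<alpha> s0 (flip_encoder s0 (c m)) [] y = P (c m) y" if "m < M" "y \<in> words n" for m y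
    using c that by (simp add: P_def PiE_iff words_def post_out_flip_encoder_eq_ol_chain)
  then have "fb_err \<alpha> s0 n M (\<lambda>m. flip_encoder s0 (c m)) (threshold_decoder M (\<lambda>u y. \<gamma> * Q y < P u y) c)
      = (1 / M) * (\<Sum>m<M. \<Sum>y\<in>words n.
          if threshold_decoder M (\<lambda>u y. \<gamma> * Q y < P u y) c y \<noteq> m then P (c m) y else 0)"
    unfolding fb_err_eq by (intro arg_cong[where f = "\<lambda>x. 1 / real M * x"] sum.cong refl) simp
  also have "\<dots> \<le> \<gamma> powr t * G ^ n + M / \<gamma>"
  proof -
    have "(\<Sum>u\<in>words n. \<pi> u * (\<Sum>y\<in>words n. if \<gamma> * Q y < P u y then 0 else P u y)) \<le> \<gamma> powr t * G ^ n"
      unfolding \<pi>_def P_def Q_def by (rule post_random_code_miss_le[OF \<gamma> t G])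
    then show ?thesis using err by linarith
  qed
  finally show ?thesis by blast
qed

lemma post_converse_exponent:
  assumes d: "0 < d"
  obtains c where "0 < c"
    "\<And>n M enc dec. exp (real n * (ln (z_norm \<alpha>) + 2 * d)) \<le> real M \<Longrightarrow>
       1 - fb_err \<alpha> s0 n M enc dec \<le> exp (- (real n * d)) + exp (- (real n * c))"
proof -
  define k where "k = ln (z_norm \<alpha>)"
  obtain B where B: "0 < B" and moment: "\<And>\<tau> b. \<bar>\<tau>\<bar> \<le> 1 / B \<Longrightarrow>
      (\<Sum>v\<in>UNIV. tilt \<tau> (z_opt_output \<alpha> v) (zchan \<alpha> b v)) \<le> exp (\<tau> * k + \<tau>\<^sup>2 * B)"
    using z_tilt_moment_bound unfolding k_def by metis
  obtain s where s: "0 < s" "s \<le> 1 / B" "s\<^sup>2 * B \<le> s * d / 2" using exists_small_tilt[OF d B] .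
  show ?thesis
  proof
    show "0 < s * d / 2" using s d by simp
    fix n M enc dec assume "exp (real n * (ln (z_norm \<alpha>) + 2 * d)) \<le> real M"
    then have M: "exp (real n * (k + 2 * d)) \<le> real M" by (simp add: k_def)
    define \<gamma> where "\<gamma> = exp (real n * (k + d))"
    have "0 < real M" using M exp_gt_zero[of "real n * (k + 2 * d)"] by linarith
    have "1 - fb_err \<alpha> s0 n M enc dec \<le> \<gamma> / M + \<gamma> powr (- s) * exp (s * k + s\<^sup>2 * B) ^ n"
      using moment s \<open>0 < real M\<close> by (intro post_converse_bound) (auto simp: \<gamma>_def)
    also have "\<gamma> / M \<le> \<gamma> / exp (real n * (k + 2 * d))"
      using M \<open>0 < real M\<close> by (intro divide_left_mono) (auto simp: \<gamma>_def)
    also have "\<dots> = exp (- (real n * d))" by (simp add: \<gamma>_def exp_diff[symmetric] algebra_simps)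
    also have "\<gamma> powr (- s) * exp (s * k + s\<^sup>2 * B) ^ n \<le> exp (- (real n * (s * d / 2)))"
    proof -
      have "real n * (s * d / 2) \<le> real n * (s * d - s\<^sup>2 * B)"
        using s(3) by (intro mult_left_mono) (auto simp: mult.commute)
      then show ?thesis unfolding \<gamma>_def tilt_exponent_eq by simp
    qed
    finally show "1 - fb_err \<alpha> s0 n M enc dec \<le> exp (- (real n * d)) + exp (- (real n * (s * d / 2)))"
      by simp
  qed
qed

lemma post_achievability_exponent:
  assumes d: "0 < d"
  obtains c where "0 < c"
    "\<And>n M. 0 < M \<Longrightarrow> real M \<le> 2 * exp (real n * (ln (z_norm \<alpha>) - 2 * d)) \<Longrightarrow>
       \<exists>enc dec. fb_err \<alpha> s0 n M enc dec \<le> exp (- (real n * c)) + 2 * exp (- (real n * d))"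
proof -
  define k where "k = ln (z_norm \<alpha>)"
  obtain B where B: "0 < B" and moment: "\<And>\<tau> b. \<bar>\<tau>\<bar> \<le> 1 / B \<Longrightarrow>
      (\<Sum>v\<in>UNIV. tilt \<tau> (z_opt_output \<alpha> v) (zchan \<alpha> b v)) \<le> exp (\<tau> * k + \<tau>\<^sup>2 * B)"
    using z_tilt_moment_bound unfolding k_def by metis
  obtain t where t: "0 < t" "t \<le> 1 / B" "t\<^sup>2 * B \<le> t * d / 2" using exists_small_tilt[OF d B] .
  show ?thesis
  proof
    show "0 < t * d / 2" using t d by simp
    fix n M :: nat assume "0 < M" and "real M \<le> 2 * exp (real n * (ln (z_norm \<alpha>) - 2 * d))"
    then have M: "real M \<le> 2 * exp (real n * (k - 2 * d))" by (simp add: k_def)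
    define \<gamma> where "\<gamma> = exp (real n * (k + - d))"
    have G: "(\<Sum>v\<in>UNIV. tilt (- t) (z_opt_output \<alpha> v) (zchan \<alpha> b v)) \<le> exp (- t * k + (- t)\<^sup>2 * B)" for b
      using moment[of "- t"] t by simp
    have "0 < \<gamma>" by (simp add: \<gamma>_def)
    obtain enc dec where "fb_err \<alpha> s0 n M enc dec \<le> \<gamma> powr t * exp (- t * k + (- t)\<^sup>2 * B) ^ n + M / \<gamma>"
      using post_achievability_bound[OF \<open>0 < M\<close> \<open>0 < \<gamma>\<close> less_imp_le[OF t(1)] G, of s0 n]
      by (elim exE) (rule that)
    also have "\<gamma> powr t * exp (- t * k + (- t)\<^sup>2 * B) ^ n \<le> exp (- (real n * (t * d / 2)))"
    proof -
      have "real n * (t * d / 2) \<le> real n * (- t * - d - (- t)\<^sup>2 * B)"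
        using t(3) by (intro mult_left_mono) (auto simp: mult.commute)
      moreover have "\<gamma> powr t * exp (- t * k + (- t)\<^sup>2 * B) ^ n = exp (- (real n * (- t * - d - (- t)\<^sup>2 * B)))"
        using tilt_exponent_eq[of n k "- d" "- t" B] by (simp add: \<gamma>_def)
      ultimately show ?thesis by simp
    qed
    also have "M / \<gamma> \<le> 2 * exp (real n * (k - 2 * d)) / \<gamma>"
      using M by (intro divide_right_mono) (auto simp: \<gamma>_def)
    also have "\<dots> = 2 * exp (real n * (k - 2 * d) - real n * (k + - d))" by (simp add: \<gamma>_def exp_diff)
    also have "real n * (k - 2 * d) - real n * (k + - d) = - (real n * d)" by (simp add: algebra_simps)
    finally have "fb_err \<alpha> s0 n M enc dec \<le> exp (- (real n * (t * d / 2))) + 2 * exp (- (real n * d))"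
      by simp
    then show "\<exists>enc dec. fb_err \<alpha> s0 n M enc dec \<le> exp (- (real n * (t * d / 2))) + 2 * exp (- (real n * d))"
      by blast
  qed
qed

lemma post_converse:
  assumes "fb_achievable \<alpha> s0 R"
  shows "R \<le> log 2 (z_norm \<alpha>)"
proof (rule ccontr)
  assume "\<not> R \<le> log 2 (z_norm \<alpha>)"
  define d where "d = (R * ln 2 - ln (z_norm \<alpha>)) / 2"
  have "ln (z_norm \<alpha>) / ln 2 < R" using \<open>\<not> R \<le> _\<close> by (simp add: log_def)
  then have d: "0 < d" by (simp add: d_def pos_divide_less_eq)
  obtain c where c: "0 < c" and exponent: "\<And>n M enc dec. exp (real n * (ln (z_norm \<alpha>) + 2 * d)) \<le> real M \<Longrightarrow>
      1 - fb_err \<alpha> s0 n M enc dec \<le> exp (- (real n * d)) + exp (- (real n * c))"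
    using post_converse_exponent[OF d] by blast
  have "\<exists>N. \<forall>n\<ge>N. \<exists>M enc dec. 2 powr (real n * R) \<le> real M \<and> fb_err \<alpha> s0 n M enc dec \<le> 1 / 4"
    using assms unfolding fb_achievable_def by (metis zero_less_divide_1_iff zero_less_numeral)
  then have "eventually (\<lambda>n. \<exists>M enc dec. 2 powr (real n * R) \<le> real M \<and> fb_err \<alpha> s0 n M enc dec \<le> 1 / 4)
      sequentially"
    unfolding eventually_sequentially .
  moreover have "eventually (\<lambda>n. exp (- (real n * d)) < 1 / 4 \<and> exp (- (real n * c)) < 1 / 4) sequentially"
    using d c by (intro eventually_conj eventually_exp_neg_less) auto
  ultimately obtain n M enc dec where M: "2 powr (real n * R) \<le> real M" and err: "fb_err \<alpha> s0 n M enc dec \<le> 1 / 4"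
    and small: "exp (- (real n * d)) < 1 / 4" "exp (- (real n * c)) < 1 / 4"
    using eventually_happens'[OF sequentially_bot, OF eventually_conj] by blast
  have "ln (z_norm \<alpha>) + 2 * d = R * ln 2" by (simp add: d_def field_simps)
  then have "2 powr (real n * R) = exp (real n * (ln (z_norm \<alpha>) + 2 * d))" by (simp add: powr_def mult_ac)
  then show False using exponent[of n M enc dec] M err small by linarith
qed

lemma post_achievable:
  assumes "0 \<le> R" "R < log 2 (z_norm \<alpha>)"
  shows "fb_achievable \<alpha> s0 R"
  unfolding fb_achievable_def
proof (intro conjI allI impI)
  fix \<epsilon> :: real assume "0 < \<epsilon>"
  define d where "d = (ln (z_norm \<alpha>) - R * ln 2) / 2"
  have "R * ln 2 < ln (z_norm \<alpha>)" using assms z_norm_gt_one by (simp add: log_def pos_less_divide_eq)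
  then have d: "0 < d" by (simp add: d_def)
  obtain c where c: "0 < c" and exponent: "\<And>n M. 0 < M \<Longrightarrow> real M \<le> 2 * exp (real n * (ln (z_norm \<alpha>) - 2 * d)) \<Longrightarrow>
      \<exists>enc dec. fb_err \<alpha> s0 n M enc dec \<le> exp (- (real n * c)) + 2 * exp (- (real n * d))"
    using post_achievability_exponent[OF d] by blast
  have "eventually (\<lambda>n. exp (- (real n * c)) < \<epsilon> / 2 \<and> exp (- (real n * d)) < \<epsilon> / 4) sequentially"
    using \<open>0 < \<epsilon>\<close> d c by (intro eventually_conj eventually_exp_neg_less) auto
  then obtain N where N: "\<And>n. N \<le> n \<Longrightarrow> exp (- (real n * c)) < \<epsilon> / 2 \<and> exp (- (real n * d)) < \<epsilon> / 4"
    unfolding eventually_sequentially by blast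
  show "\<exists>N. \<forall>n\<ge>N. \<exists>M enc dec. 2 powr (real n * R) \<le> real M \<and> fb_err \<alpha> s0 n M enc dec \<le> \<epsilon>"
  proof (rule exI[of _ N], intro allI impI)
    fix n assume "N \<le> n"
    define x where "x = 2 powr (real n * R)"
    have "ln (z_norm \<alpha>) - 2 * d = R * ln 2" by (simp add: d_def field_simps)
    then have x: "x = exp (real n * (ln (z_norm \<alpha>) - 2 * d))" by (simp add: x_def powr_def mult_ac)
    have "1 \<le> x" using assms(1) by (simp add: x_def ge_one_powr_ge_zero)
    define M where "M = nat \<lceil>x\<rceil>"
    have "of_int \<lceil>x\<rceil> < x + 1" by linarith
    then have M: "x \<le> real M" "real M \<le> 2 * x" using \<open>1 \<le> x\<close> by (auto simp: M_def)
    then have "0 < M" using \<open>1 \<le> x\<close> by simp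
    moreover have "real M \<le> 2 * exp (real n * (ln (z_norm \<alpha>) - 2 * d))" using M(2) x by simp
    ultimately obtain enc dec where "fb_err \<alpha> s0 n M enc dec \<le> exp (- (real n * c)) + 2 * exp (- (real n * d))"
      using exponent by blast
    then have "fb_err \<alpha> s0 n M enc dec \<le> \<epsilon>" using N[OF \<open>N \<le> n\<close>] by linarith
    then show "\<exists>M enc dec. 2 powr (real n * R) \<le> real M \<and> fb_err \<alpha> s0 n M enc dec \<le> \<epsilon>"
      using M(1) x_def by blast
  qed
qed (use assms in simp)

end

theorem lemma2:
  fixes \<alpha> :: real and s0 :: bool
  assumes "0 \<le> \<alpha>" and "\<alpha> < 1"
  shows "fb_capacity \<alpha> s0 =
    - log 2 (1 / (1 + (1 - \<alpha>) * pw \<alpha> (\<alpha> / (1 - \<alpha>))))"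
proof -
  interpret z_channel \<alpha> using assms by unfold_locales
  define C where "C = log 2 (z_norm \<alpha>)"
  have "0 < C" using z_norm_gt_one by (simp add: C_def)
  have "Sup {R. fb_achievable \<alpha> s0 R} = C"
  proof (rule cSup_eq_non_empty)
    show "{R. fb_achievable \<alpha> s0 R} \<noteq> {}" using post_achievable[of 0] \<open>0 < C\<close> by (auto simp: C_def)
    show "R \<le> C" if "R \<in> {R. fb_achievable \<alpha> s0 R}" for R using that post_converse by (simp add: C_def)
    show "C \<le> y" if "\<And>R. R \<in> {R. fb_achievable \<alpha> s0 R} \<Longrightarrow> R \<le> y" for y
    proof (rule ccontr)
      assume "\<not> C \<le> y"
      then have "fb_achievable \<alpha> s0 ((max y 0 + C) / 2)"
        using \<open>0 < C\<close> by (intro post_achievable) (auto simp: C_def)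
      then show False using that \<open>\<not> C \<le> y\<close> \<open>0 < C\<close> by force
    qed
  qed
  moreover have "- log 2 (1 / (1 + (1 - \<alpha>) * pw \<alpha> (\<alpha> / (1 - \<alpha>)))) = C"
    using z_norm_gt_one by (simp add: C_def z_norm_def z_weight_def log_divide)
  ultimately show ?thesis by (simp add: fb_capacity_def)
qed

end
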